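(* Let $A=B[x;\alpha,\delta]_p$ be a Poisson polynomial algebra over a field $k$ of characteristic zero. Assume that $\delta$ is locally nilpotent and that $\alpha\delta=\delta(\alpha+s)$ for some $s\in k^\times$. Then the rule $$\theta(b)=\sum_{n=0}^\infty \frac{1}{n!}\left(\frac{-1}{s}\right)^n\delta^n(b)x^{-n}$$ defines a $k$-algebra homomorphism $\theta:B\to B[x^{\pm1}]$, and $\{x,\theta(b)\}=\theta\alpha(b)\,x$ for all $b\in B$ (bracket computed in the Poisson Laurent polynomial algebra $B[x^{\pm1};\alpha,\delta]_p$).
   Context: If $B$ is a Poisson algebra, $\alpha$ a Poisson derivation of $B$ and $\delta$ a derivation of $B$ with $\delta(\{a,b\})=\{\delta(a),b\}+\{a,\delta(b)\}+\alpha(a)\delta(b)-\delta(a)\alpha(b)$ for $a,b\in B$, then $B[x;\alpha,\delta]_p$ is $B[x]$ with the unique Poisson bracket extending that of $B$ with $\{x,b\}=\alpha(b)x+\delta(b)$, and $B[x^{\pm1};\alpha,\delta]_p$ is the unique extension of this Poisson structure to $B[x^{\pm1}]$. A derivation $\delta$ is locally nilpotent if for each $b$ some power $\delta^N(b)=0$. *)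

theory Defs
  imports "HOL-Computational_Algebra.Formal_Laurent_Series"
begin

(* A commutative k-algebra B is modelled as a type 'b :: comm_ring_1 together with
   a ring homomorphism iota : k -> B (the structure map). *)

definition ring_hom_map :: "('k::comm_ring_1 \<Rightarrow> 'b::comm_ring_1) \<Rightarrow> bool" where
  "ring_hom_map \<iota> \<longleftrightarrow> (\<forall>a b. \<iota> (a + b) = \<iota> a + \<iota> b) \<and> (\<forall>a b. \<iota> (a * b) = \<iota> a * \<iota> b) \<and> \<iota> 1 = 1"

definition k_linear :: "('k \<Rightarrow> 'b::comm_ring_1) \<Rightarrow> ('b \<Rightarrow> 'b) \<Rightarrow> bool" where
  "k_linear \<iota> f \<longleftrightarrow> (\<forall>a b. f (a + b) = f a + f b) \<and> (\<forall>c a. f (\<iota> c * a) = \<iota> c * f a)"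

definition derivation :: "('k \<Rightarrow> 'b::comm_ring_1) \<Rightarrow> ('b \<Rightarrow> 'b) \<Rightarrow> bool" where
  "derivation \<iota> d \<longleftrightarrow> k_linear \<iota> d \<and> (\<forall>a b. d (a * b) = d a * b + a * d b)"

definition poisson_bracket_on :: "'b::comm_ring_1 set \<Rightarrow> ('k \<Rightarrow> 'b) \<Rightarrow> ('b \<Rightarrow> 'b \<Rightarrow> 'b) \<Rightarrow> bool" where
  "poisson_bracket_on S \<iota> P \<longleftrightarrow>
     (\<forall>a\<in>S. \<forall>b\<in>S. P a b \<in> S) \<and>
     (\<forall>a\<in>S. \<forall>b\<in>S. \<forall>c\<in>S. P (a + b) c = P a c + P b c) \<and>
     (\<forall>c. \<forall>a\<in>S. \<forall>b\<in>S. P (\<iota> c * a) b = \<iota> c * P a b) \<and>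
     (\<forall>a\<in>S. \<forall>b\<in>S. P a b = - P b a) \<and>
     (\<forall>a\<in>S. \<forall>b\<in>S. \<forall>c\<in>S. P a (P b c) + P b (P c a) + P c (P a b) = 0) \<and>
     (\<forall>a\<in>S. \<forall>b\<in>S. \<forall>c\<in>S. P (a * b) c = a * P b c + b * P a c)"

abbreviation poisson_bracket :: "('k \<Rightarrow> 'b::comm_ring_1) \<Rightarrow> ('b \<Rightarrow> 'b \<Rightarrow> 'b) \<Rightarrow> bool" where
  "poisson_bracket \<iota> P \<equiv> poisson_bracket_on UNIV \<iota> P"

definition poisson_derivation :: "('k \<Rightarrow> 'b::comm_ring_1) \<Rightarrow> ('b \<Rightarrow> 'b \<Rightarrow> 'b) \<Rightarrow> ('b \<Rightarrow> 'b) \<Rightarrow> bool" where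
  "poisson_derivation \<iota> P \<alpha> \<longleftrightarrow> derivation \<iota> \<alpha> \<and> (\<forall>a b. \<alpha> (P a b) = P (\<alpha> a) b + P a (\<alpha> b))"

definition locally_nilpotent :: "('b::zero \<Rightarrow> 'b) \<Rightarrow> bool" where
  "locally_nilpotent d \<longleftrightarrow> (\<forall>b. \<exists>N. (d ^^ N) b = 0)"

(* Laurent polynomials B[x^{\<pm>1}]: formal Laurent series with finitely many nonzero coefficients;
   the variable x is fls_X, and B embeds via fls_const. *)
definition laurent_polys :: "'b::zero fls set" where
  "laurent_polys = {f. finite {n. fls_nth f n \<noteq> 0}}"

definition laurent_iota :: "('k \<Rightarrow> 'b::comm_ring_1) \<Rightarrow> 'k \<Rightarrow> 'b fls" where
  "laurent_iota \<iota> c = fls_const (\<iota> c)"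

(* P is a Poisson bracket on B[x^{\<pm>1}] extending that of B with {x,b} = \<alpha>(b)x + \<delta>(b),
   i.e. P is the bracket of B[x^{\<pm>1};\<alpha>,\<delta>]_p *)
definition poisson_laurent_ext ::
  "('k \<Rightarrow> 'b::comm_ring_1) \<Rightarrow> ('b \<Rightarrow> 'b \<Rightarrow> 'b) \<Rightarrow> ('b \<Rightarrow> 'b) \<Rightarrow> ('b \<Rightarrow> 'b) \<Rightarrow> ('b fls \<Rightarrow> 'b fls \<Rightarrow> 'b fls) \<Rightarrow> bool" where
  "poisson_laurent_ext \<iota> PB \<alpha> \<delta> P \<longleftrightarrow>
     poisson_bracket_on laurent_polys (laurent_iota \<iota>) P \<and>
     (\<forall>a b. P (fls_const a) (fls_const b) = fls_const (PB a b)) \<and>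
     (\<forall>b. P fls_X (fls_const b) = fls_const (\<alpha> b) * fls_X + fls_const (\<delta> b))"

(* theta(b) = sum_{n>=0} (1/n!) (-1/s)^n \<delta>^n(b) x^{-n}; the sum is over the (finite,
   by local nilpotence) set of n with \<delta>^n(b) \<noteq> 0; other terms vanish. *)
definition theta :: "('k::field_char_0 \<Rightarrow> 'b::comm_ring_1) \<Rightarrow> ('b \<Rightarrow> 'b) \<Rightarrow> 'k \<Rightarrow> 'b \<Rightarrow> 'b fls" where
  "theta \<iota> \<delta> s b = (\<Sum>n\<in>{n. (\<delta> ^^ n) b \<noteq> 0}.
      fls_const (\<iota> (inverse (fact n) * (- 1 / s) ^ n) * (\<delta> ^^ n) b) * fls_X_intpow (- int n))"

end

theory Submission
  imports Defs
begin

text \<open>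
  Since \<open>\<delta>\<close> is locally nilpotent, \<open>\<theta>(b)\<close> is the finite sum of the terms
  \<open>t\<^sub>n(b) = c\<^sub>n \<delta>\<^sup>n(b) x\<^sup>-\<^sup>n\<close>, \<open>c\<^sub>n = (-1/s)\<^sup>n / n!\<close>, over any range \<open>n < N\<close> with \<open>\<delta>\<^sup>N(b) = 0\<close>. Multiplicativity is the exponential law: by the
  Leibniz rule and \<open>c\<^sub>n (n choose k) = c\<^sub>k c\<^sub>n\<^sub>-\<^sub>k\<close>, \<open>t\<^sub>n(ab)\<close> is the degree \<open>-n\<close> part of the
  Cauchy product of the series of \<open>a\<close> and \<open>b\<close>.
  For the bracket, \<open>{x,-}\<close> is a derivation of \<open>B[x\<^sup>\<plusminus>\<^sup>1]\<close> vanishing on the powers of \<open>x\<close>, so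
  \<open>{x, t\<^sub>n(b)} = c\<^sub>n (\<alpha>(\<delta>\<^sup>n b) x + \<delta>\<^sup>n\<^sup>+\<^sup>1 b) x\<^sup>-\<^sup>n\<close>. Iterating \<open>\<alpha>\<delta> = \<delta>(\<alpha> + s)\<close> gives
  \<open>\<alpha> \<delta>\<^sup>n = \<delta>\<^sup>n \<alpha> + n s \<delta>\<^sup>n\<close>; the \<open>\<delta>\<^sup>n \<alpha>\<close> parts sum to \<open>\<theta>(\<alpha> b) x\<close>, and since
  \<open>(n+1) s c\<^sub>n\<^sub>+\<^sub>1 = -c\<^sub>n\<close> the remaining parts telescope to zero.
\<close>

lemma funpow_eq_0_mono:
  fixes d :: "'a::zero \<Rightarrow> 'a"
  assumes "d 0 = 0" and "(d ^^ N) b = 0" and "N \<le> m"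
  shows "(d ^^ m) b = 0"
proof -
  have "(d ^^ k) 0 = 0" for k
    by (induction k) (simp_all add: assms(1))
  moreover have "(d ^^ m) b = (d ^^ (m - N)) ((d ^^ N) b)"
    using \<open>N \<le> m\<close> by (metis funpow_add le_add_diff_inverse2 o_apply)
  ultimately show ?thesis
    using assms(2) by simp
qed

lemma additive_of_nat_mult:
  fixes d :: "'b::comm_ring_1 \<Rightarrow> 'b"
  assumes "\<And>x y. d (x + y) = d x + d y"
  shows "d (of_nat m * x) = of_nat m * d x"
proof (induction m)
  case 0
  show ?case using assms[of 0 0] by simp
next
  case (Suc m)
  then show ?case using assms[of x "of_nat m * x"] by (simp add: distrib_right)
qed

lemma funpow_Leibniz:
  fixes d :: "'b::comm_ring_1 \<Rightarrow> 'b"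
  assumes add: "\<And>x y. d (x + y) = d x + d y"
    and mult: "\<And>x y. d (x * y) = d x * y + x * d y"
  shows "(d ^^ n) (a * b) = (\<Sum>k\<le>n. of_nat (n choose k) * (d ^^ k) a * (d ^^ (n - k)) b)"
proof (induction n)
  case 0
  show ?case by simp
next
  case (Suc n)
  define D E where "D k = (d ^^ k) a" and "E k = (d ^^ k) b" for k
  have d0: "d 0 = 0" using add[of 0 0] by simp
  have step: "d (of_nat c * D k * E j) = of_nat c * D (Suc k) * E j + of_nat c * D k * E (Suc j)"
    for c k j
  proof -
    have "d (of_nat c * D k * E j) = of_nat c * d (D k * E j)"
      using additive_of_nat_mult[of d c "D k * E j", OF add] by (simp add: mult.assoc)
    then show ?thesis
      by (simp add: mult D_def E_def algebra_simps)
  qed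
  have shift: "(\<Sum>k\<le>n. of_nat (n choose k) * D k * E (Suc n - k))
      = D 0 * E (Suc n) + (\<Sum>k\<le>n. of_nat (n choose Suc k) * D (Suc k) * E (n - k))"
    using sum.atMost_Suc_shift[of "\<lambda>k. of_nat (n choose k) * D k * E (Suc n - k)" n] by (simp add: binomial_eq_0)
  have "(d ^^ Suc n) (a * b) = d (\<Sum>k\<le>n. of_nat (n choose k) * D k * E (n - k))"
    using Suc by (simp add: D_def E_def)
  also have "\<dots> = (\<Sum>k\<le>n. of_nat (n choose k) * D (Suc k) * E (n - k))
      + (\<Sum>k\<le>n. of_nat (n choose k) * D k * E (Suc n - k))"
    by (simp add: sum_comp_morphism[of d, OF d0 add, symmetric] o_def step sum.distrib Suc_diff_le)
  also have "\<dots> = D 0 * E (Suc n) + (\<Sum>k\<le>n. of_nat (Suc n choose Suc k) * D (Suc k) * E (n - k))"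
    by (simp add: shift sum.distrib distrib_right add_ac)
  also have "\<dots> = (\<Sum>k\<le>Suc n. of_nat (Suc n choose k) * D k * E (Suc n - k))"
    unfolding sum.atMost_Suc_shift by simp
  finally show ?case
    by (simp add: D_def E_def)
qed

lemma sum_convolution_truncated:
  fixes f g :: "nat \<Rightarrow> 'a::comm_semiring_0"
  assumes f: "\<And>i. N \<le> i \<Longrightarrow> f i = 0" and g: "\<And>j. N \<le> j \<Longrightarrow> g j = 0"
  shows "(\<Sum>n<2 * N. \<Sum>k\<le>n. f k * g (n - k)) = (\<Sum>i<N. f i) * (\<Sum>j<N. g j)"
proof -
  have "(\<Sum>n<2 * N. \<Sum>k\<le>n. f k * g (n - k)) = (\<Sum>(i, j)\<in>{(i, j). i + j < 2 * N}. f i * g j)"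
    by (rule sum.triangle_reindex[symmetric])
  also have "\<dots> = (\<Sum>(i, j)\<in>{..<N} \<times> {..<N}. f i * g j)"
  proof (rule sum.mono_neutral_right)
    show "finite {(i, j). i + j < 2 * N}"
      by (rule finite_subset[of _ "{..<2 * N} \<times> {..<2 * N}"]) auto
  qed (auto simp: not_less, metis f mult_zero_left not_less, metis g mult_zero_right not_less)
  also have "\<dots> = (\<Sum>i<N. f i) * (\<Sum>j<N. g j)"
    by (simp add: sum.cartesian_product sum_product)
  finally show ?thesis .
qed

lemma fls_const_sum: "fls_const (\<Sum>i\<in>A. f i) = (\<Sum>i\<in>A. fls_const (f i))"
  using sum_comp_morphism[of fls_const f A] by (simp add: fls_plus_const o_def)

lemma laurent_polys_add:
  "f \<in> laurent_polys \<Longrightarrow> g \<in> laurent_polys \<Longrightarrow> f + g \<in> laurent_polys"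
  unfolding laurent_polys_def
  by (auto intro: finite_subset[of _ "{n. fls_nth f n \<noteq> 0} \<union> {n. fls_nth g n \<noteq> 0}"])

lemma zero_in_laurent_polys: "0 \<in> laurent_polys"
  by (simp add: laurent_polys_def)

lemma laurent_polys_sum:
  "(\<And>i. i \<in> A \<Longrightarrow> f i \<in> laurent_polys) \<Longrightarrow> (\<Sum>i\<in>A. f i) \<in> laurent_polys"
  by (induction A rule: infinite_finite_induct) (simp_all add: zero_in_laurent_polys laurent_polys_add)

lemma laurent_polys_monomial:
  "fls_const (c :: 'a::semiring_1) * fls_X_intpow i \<in> laurent_polys"
proof -
  have "{n. fls_nth (fls_const c * fls_X_intpow i) n \<noteq> 0} \<subseteq> {i}"
    by (auto simp: fls_X_intpow_times_conv_shift fls_shift_const_nth split: if_splits)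
  then show ?thesis
    unfolding laurent_polys_def using finite_subset by auto
qed

lemma fls_const_in_laurent_polys: "fls_const (c :: 'a::semiring_1) \<in> laurent_polys"
  using laurent_polys_monomial[of c 0] by simp

lemma fls_X_intpow_in_laurent_polys: "(fls_X_intpow i :: 'a::semiring_1 fls) \<in> laurent_polys"
  using laurent_polys_monomial[of 1 i] by simp

lemma fls_X_in_laurent_polys: "(fls_X :: 'a::semiring_1 fls) \<in> laurent_polys"
  using fls_X_intpow_in_laurent_polys[of 1] by (simp add: fls_X_conv_shift_1)

lemma ring_hom_map_add: "ring_hom_map \<iota> \<Longrightarrow> \<iota> (a + b) = \<iota> a + \<iota> b"
  and ring_hom_map_mult: "ring_hom_map \<iota> \<Longrightarrow> \<iota> (a * b) = \<iota> a * \<iota> b"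
  and ring_hom_map_1: "ring_hom_map \<iota> \<Longrightarrow> \<iota> 1 = 1"
  unfolding ring_hom_map_def by blast+

lemma ring_hom_map_0: "ring_hom_map \<iota> \<Longrightarrow> \<iota> 0 = 0"
  using ring_hom_map_add[of \<iota> 0 0] by simp

lemma ring_hom_map_uminus: "ring_hom_map \<iota> \<Longrightarrow> \<iota> (- a) = - \<iota> a"
  using ring_hom_map_add[of \<iota> "- a" a] ring_hom_map_0[of \<iota>] by (simp add: eq_neg_iff_add_eq_0)

lemma ring_hom_map_of_nat: "ring_hom_map \<iota> \<Longrightarrow> \<iota> (of_nat n) = of_nat n"
  by (induction n) (simp_all add: ring_hom_map_0 ring_hom_map_add ring_hom_map_1)

lemma ring_hom_map_laurent_iota: "ring_hom_map \<iota> \<Longrightarrow> ring_hom_map (laurent_iota \<iota>)"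
  by (simp add: ring_hom_map_def laurent_iota_def fls_plus_const)

lemma ring_hom_map_double_eq_0:
  fixes \<iota> :: "'k::field_char_0 \<Rightarrow> 'b::comm_ring_1" and w :: 'b
  assumes "ring_hom_map \<iota>" and "w + w = 0"
  shows "w = 0"
proof -
  have half: "\<iota> (1 / 2) * 2 = 1"
    using ring_hom_map_mult[OF assms(1), of "1 / 2" "1 + 1"] ring_hom_map_add[OF assms(1), of 1 1]
      ring_hom_map_1[OF assms(1)]
    by simp
  have "w = \<iota> (1 / 2) * (w + w)"
    by (simp add: mult_2[symmetric] mult.assoc[symmetric] half)
  then show ?thesis
    using assms(2) by simp
qed

lemma derivationD:
  assumes "derivation \<iota> d"
  shows derivation_add: "d (a + b) = d a + d b"
    and derivation_scale: "d (\<iota> c * a) = \<iota> c * d a"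
    and derivation_mult: "d (a * b) = d a * b + a * d b"
  using assms unfolding derivation_def k_linear_def by blast+

lemma poisson_bracket_onD:
  assumes "poisson_bracket_on S \<iota> P" and "a \<in> S" "b \<in> S" "c \<in> S"
  shows poisson_bracket_on_add_left: "P (a + b) c = P a c + P b c"
    and poisson_bracket_on_antisym: "P a b = - P b a"
    and poisson_bracket_on_mult_left: "P (a * b) c = a * P b c + b * P a c"
  using assms unfolding poisson_bracket_on_def by blast+

lemma poisson_bracket_on_add_right:
  assumes "poisson_bracket_on S \<iota> P" and "h \<in> S" "f \<in> S" "g \<in> S" "f + g \<in> S"
  shows "P h (f + g) = P h f + P h g"
  using poisson_bracket_on_antisym[OF assms(1,2,5,2)] poisson_bracket_on_add_left[OF assms(1,3,4,2)]
    poisson_bracket_on_antisym[OF assms(1,2,3,2)] poisson_bracket_on_antisym[OF assms(1,2,4,2)]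
  by simp

lemma poisson_bracket_on_mult_right:
  assumes "poisson_bracket_on S \<iota> P" and "h \<in> S" "f \<in> S" "g \<in> S" "f * g \<in> S"
  shows "P h (f * g) = f * P h g + g * P h f"
  using poisson_bracket_on_antisym[OF assms(1,2,5,2)] poisson_bracket_on_mult_left[OF assms(1,3,4,2)]
    poisson_bracket_on_antisym[OF assms(1,2,3,2)] poisson_bracket_on_antisym[OF assms(1,2,4,2)]
  by simp

lemma poisson_bracket_on_self:
  fixes \<iota> :: "'k::field_char_0 \<Rightarrow> 'b::comm_ring_1"
  assumes "poisson_bracket_on S \<iota> P" and "ring_hom_map \<iota>" and "h \<in> S"
  shows "P h h = 0"
proof (rule ring_hom_map_double_eq_0[OF assms(2)])
  show "P h h + P h h = 0"
    using poisson_bracket_on_antisym[OF assms(1,3,3,3)] by simp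
qed

lemma poisson_laurent_ext_X_X_intpow:
  fixes \<iota> :: "'k::field_char_0 \<Rightarrow> 'b::comm_ring_1"
  assumes \<iota>: "ring_hom_map \<iota>" and ext: "poisson_laurent_ext \<iota> PB \<alpha> \<delta> P"
  shows "P fls_X (fls_X_intpow (- int n)) = 0"
proof -
  define X Y :: "'b fls" where "X = fls_X" and "Y = fls_X_intpow (- 1)"
  have br: "poisson_bracket_on laurent_polys (laurent_iota \<iota>) P"
    using ext unfolding poisson_laurent_ext_def by blast
  have X: "X \<in> laurent_polys" and Y: "Y \<in> laurent_polys" and one: "(1 :: 'b fls) \<in> laurent_polys"
    unfolding X_def Y_def
    by (rule fls_X_in_laurent_polys fls_X_intpow_in_laurent_polys fls_const_in_laurent_polys[of 1, simplified])+
  have XY: "X * Y = 1"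
    unfolding X_def Y_def fls_X_conv_shift_1 by (simp add: fls_X_intpow_times_conv_shift)
  have "P X 1 = 1 * P X 1 + 1 * P X 1"
    using poisson_bracket_on_mult_right[OF br X one one] one by simp
  then have P1: "P X 1 = 0"
    by simp
  have PX: "P X X = 0"
    by (rule poisson_bracket_on_self[OF br ring_hom_map_laurent_iota[OF \<iota>] X])
  have "Y * (X * P X Y) = 0"
    using poisson_bracket_on_mult_right[OF br X X Y] one XY P1 PX by simp
  then have PY: "P X Y = 0"
    using XY by (simp add: mult.assoc[symmetric] mult.commute)
  show ?thesis
    unfolding X_def[symmetric]
  proof (induction n)
    case 0
    show ?case using P1 by simp
  next
    case (Suc n)
    have split: "fls_X_intpow (- int (Suc n)) = Y * fls_X_intpow (- int n)"
      unfolding Y_def fls_X_intpow_times_fls_X_intpow by (simp add: add.commute)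
    have "P X (Y * fls_X_intpow (- int n)) = Y * P X (fls_X_intpow (- int n)) + fls_X_intpow (- int n) * P X Y"
      by (rule poisson_bracket_on_mult_right[OF br X Y fls_X_intpow_in_laurent_polys])
        (simp only: split[symmetric] fls_X_intpow_in_laurent_polys)
    then show ?case
      by (simp only: split Suc PY mult_zero_right add_0_right)
  qed
qed

lemma poisson_laurent_ext_X_monomial:
  fixes \<iota> :: "'k::field_char_0 \<Rightarrow> 'b::comm_ring_1"
  assumes \<iota>: "ring_hom_map \<iota>" and ext: "poisson_laurent_ext \<iota> PB \<alpha> \<delta> P"
  shows "P fls_X (fls_const b * fls_X_intpow (- int n))
    = fls_X_intpow (- int n) * (fls_const (\<alpha> b) * fls_X + fls_const (\<delta> b))"
proof -
  have br: "poisson_bracket_on laurent_polys (laurent_iota \<iota>) P"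
    and const: "P fls_X (fls_const b) = fls_const (\<alpha> b) * fls_X + fls_const (\<delta> b)"
    using ext unfolding poisson_laurent_ext_def by blast+
  show ?thesis
    using poisson_bracket_on_mult_right[OF br fls_X_in_laurent_polys fls_const_in_laurent_polys
        fls_X_intpow_in_laurent_polys laurent_polys_monomial]
    by (simp only: const poisson_laurent_ext_X_X_intpow[OF assms] mult_zero_right add_0)
qed

lemma poisson_laurent_ext_X_sum:
  assumes ext: "poisson_laurent_ext \<iota> PB \<alpha> \<delta> P" and f: "\<And>i. i \<in> A \<Longrightarrow> f i \<in> laurent_polys"
  shows "P fls_X (\<Sum>i\<in>A. f i) = (\<Sum>i\<in>A. P fls_X (f i))"
proof -
  have br: "poisson_bracket_on laurent_polys (laurent_iota \<iota>) P"
    using ext unfolding poisson_laurent_ext_def by blast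
  note add = poisson_bracket_on_add_right[OF br fls_X_in_laurent_polys]
  show ?thesis
    using f
  proof (induction A rule: infinite_finite_induct)
    case (insert x F)
    then show ?case
      using add[of "f x" "sum f F"] by (simp add: laurent_polys_sum laurent_polys_add)
  qed (use add[OF zero_in_laurent_polys zero_in_laurent_polys] in \<open>simp_all add: zero_in_laurent_polys\<close>)
qed

definition theta_coeff :: "'k::field_char_0 \<Rightarrow> nat \<Rightarrow> 'k" where
  "theta_coeff s n = inverse (fact n) * (- 1 / s) ^ n"

definition theta_term :: "('k::field_char_0 \<Rightarrow> 'b::comm_ring_1) \<Rightarrow> ('b \<Rightarrow> 'b) \<Rightarrow> 'k \<Rightarrow> 'b \<Rightarrow> nat \<Rightarrow> 'b fls"
  where "theta_term \<iota> \<delta> s b n = fls_const (\<iota> (theta_coeff s n) * (\<delta> ^^ n) b) * fls_X_intpow (- int n)"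

definition theta_trunc :: "('k::field_char_0 \<Rightarrow> 'b::comm_ring_1) \<Rightarrow> ('b \<Rightarrow> 'b) \<Rightarrow> 'k \<Rightarrow> nat \<Rightarrow> 'b \<Rightarrow> 'b fls"
  where "theta_trunc \<iota> \<delta> s N b = (\<Sum>n<N. theta_term \<iota> \<delta> s b n)"

text \<open>The part of \<open>{x, t\<^sub>n(b)}\<close> contributed by the shift \<open>n s \<delta>\<^sup>n\<close> in \<open>\<alpha> \<delta>\<^sup>n = \<delta>\<^sup>n \<alpha> + n s \<delta>\<^sup>n\<close>.\<close>

definition theta_shift_part :: "('k::field_char_0 \<Rightarrow> 'b::comm_ring_1) \<Rightarrow> ('b \<Rightarrow> 'b) \<Rightarrow> 'k \<Rightarrow> 'b \<Rightarrow> nat \<Rightarrow> 'b fls"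
  where "theta_shift_part \<iota> \<delta> s b n =
    fls_const (\<iota> (theta_coeff s n * (of_nat n * s)) * (\<delta> ^^ n) b) * fls_X_intpow (- int n) * fls_X"

lemma theta_coeff_binomial:
  fixes s :: "'k::field_char_0"
  assumes "k \<le> n"
  shows "theta_coeff s n * of_nat (n choose k) = theta_coeff s k * theta_coeff s (n - k)"
proof -
  define t :: 'k where "t = - 1 / s"
  have "t ^ n = t ^ k * t ^ (n - k)"
    using assms by (simp flip: power_add)
  moreover have "(of_nat (n choose k) :: 'k) = fact n / (fact k * fact (n - k))"
    using binomial_fact[OF assms] .
  ultimately show ?thesis
    unfolding theta_coeff_def t_def[symmetric] by (simp add: field_simps)
qed

lemma theta_coeff_Suc:
  fixes s :: "'k::field_char_0"
  assumes "s \<noteq> 0"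
  shows "theta_coeff s (Suc m) * (of_nat (Suc m) * s) = - theta_coeff s m"
proof -
  have "inverse (fact (Suc m)) * of_nat (Suc m) = (inverse (fact m) :: 'k)"
    by (simp add: field_simps del: of_nat_Suc)
  moreover have "(- 1 / s) * s = -1"
    using assms by simp
  ultimately show ?thesis
    unfolding theta_coeff_def power_Suc
    by (metis (no_types, lifting) mult.commute mult.left_commute mult_minus1)
qed

lemma theta_term_in_laurent_polys: "theta_term \<iota> \<delta> s b n \<in> laurent_polys"
  unfolding theta_term_def by (rule laurent_polys_monomial)

lemma theta_trunc_in_laurent_polys: "theta_trunc \<iota> \<delta> s N b \<in> laurent_polys"
  unfolding theta_trunc_def by (intro laurent_polys_sum theta_term_in_laurent_polys)

locale locally_nilpotent_derivation =
  fixes \<iota> :: "'k::field_char_0 \<Rightarrow> 'b::comm_ring_1" and \<delta> :: "'b \<Rightarrow> 'b"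
  assumes ring_hom: "ring_hom_map \<iota>"
    and derivation: "derivation \<iota> \<delta>"
    and locally_nilpotent: "locally_nilpotent \<delta>"
begin

lemma delta_0: "\<delta> 0 = 0"
  using derivation_add[OF derivation, of 0 0] by simp

lemma funpow_delta_add: "(\<delta> ^^ n) (a + b) = (\<delta> ^^ n) a + (\<delta> ^^ n) b"
  by (induction n) (simp_all add: derivation_add[OF derivation])

lemma funpow_delta_scale: "(\<delta> ^^ n) (\<iota> c * a) = \<iota> c * (\<delta> ^^ n) a"
  by (induction n) (simp_all add: derivation_scale[OF derivation])

lemma funpow_delta_eventually_0:
  obtains N where "\<And>m. N \<le> m \<Longrightarrow> (\<delta> ^^ m) b = 0"
  using locally_nilpotent funpow_eq_0_mono[of \<delta>, OF delta_0]
  unfolding locally_nilpotent_def by blast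

lemma theta_eq_theta_trunc:
  assumes "(\<delta> ^^ N) b = 0"
  shows "theta \<iota> \<delta> s b = theta_trunc \<iota> \<delta> s N b"
  unfolding theta_def theta_trunc_def theta_term_def theta_coeff_def
proof (rule sum.mono_neutral_left)
  show "{n. (\<delta> ^^ n) b \<noteq> 0} \<subseteq> {..<N}"
    using funpow_eq_0_mono[of \<delta>, OF delta_0 assms] by (auto simp: not_less[symmetric])
qed auto

lemma theta_in_laurent_polys: "theta \<iota> \<delta> s b \<in> laurent_polys"
proof -
  obtain N where "(\<delta> ^^ N) b = 0"
    using funpow_delta_eventually_0 by blast
  then show ?thesis
    by (simp add: theta_eq_theta_trunc theta_trunc_in_laurent_polys)
qed

lemma theta_term_add: "theta_term \<iota> \<delta> s (a + b) n = theta_term \<iota> \<delta> s a n + theta_term \<iota> \<delta> s b n"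
  unfolding theta_term_def by (simp add: funpow_delta_add distrib_left distrib_right flip: fls_plus_const)

lemma theta_term_scale: "theta_term \<iota> \<delta> s (\<iota> c * b) n = laurent_iota \<iota> c * theta_term \<iota> \<delta> s b n"
  unfolding theta_term_def laurent_iota_def funpow_delta_scale by (simp add: mult_ac flip: fls_const_mult_const)

lemma theta_add: "theta \<iota> \<delta> s (a + b) = theta \<iota> \<delta> s a + theta \<iota> \<delta> s b"
proof -
  obtain N where a: "(\<delta> ^^ N) a = 0" and b: "(\<delta> ^^ N) b = 0"
    by (metis funpow_delta_eventually_0 max.cobounded1 max.cobounded2)
  then have "(\<delta> ^^ N) (a + b) = 0"
    by (simp add: funpow_delta_add)
  then show ?thesis
    using a b by (simp add: theta_eq_theta_trunc theta_trunc_def theta_term_add sum.distrib)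
qed

lemma theta_scale: "theta \<iota> \<delta> s (\<iota> c * b) = laurent_iota \<iota> c * theta \<iota> \<delta> s b"
proof -
  obtain N where b: "(\<delta> ^^ N) b = 0"
    using funpow_delta_eventually_0 by blast
  then have "(\<delta> ^^ N) (\<iota> c * b) = 0"
    by (simp add: funpow_delta_scale)
  then show ?thesis
    using b by (simp add: theta_eq_theta_trunc theta_trunc_def theta_term_scale sum_distrib_left)
qed

lemma theta_one: "theta \<iota> \<delta> s 1 = 1"
proof -
  have "\<delta> 1 = 0"
    using derivation_mult[OF derivation, of 1 1] by simp
  then have "theta \<iota> \<delta> s 1 = theta_trunc \<iota> \<delta> s 1 1"
    by (simp add: theta_eq_theta_trunc)
  then show ?thesis
    by (simp add: theta_trunc_def theta_term_def theta_coeff_def ring_hom_map_1[OF ring_hom])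
qed

lemma theta_term_mult:
  "theta_term \<iota> \<delta> s (a * b) n = (\<Sum>k\<le>n. theta_term \<iota> \<delta> s a k * theta_term \<iota> \<delta> s b (n - k))"
proof -
  have "theta_term \<iota> \<delta> s (a * b) n = (\<Sum>k\<le>n.
      fls_const (\<iota> (theta_coeff s n) * (of_nat (n choose k) * (\<delta> ^^ k) a * (\<delta> ^^ (n - k)) b))
        * fls_X_intpow (- int n))"
    unfolding theta_term_def
      funpow_Leibniz[of \<delta>, OF derivation_add[OF derivation] derivation_mult[OF derivation]]
    by (simp add: sum_distrib_left fls_const_sum sum_distrib_right)
  also have "\<dots> = (\<Sum>k\<le>n. theta_term \<iota> \<delta> s a k * theta_term \<iota> \<delta> s b (n - k))"
  proof (rule sum.cong[OF refl])
    fix k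
    assume "k \<in> {..n}"
    then have kn: "k \<le> n"
      by simp
    have "\<iota> (theta_coeff s n) * of_nat (n choose k) = \<iota> (theta_coeff s k) * \<iota> (theta_coeff s (n - k))"
      using theta_coeff_binomial[OF kn, of s] ring_hom
      by (metis ring_hom_map_mult ring_hom_map_of_nat)
    then have coeff: "\<iota> (theta_coeff s n) * (of_nat (n choose k) * (\<delta> ^^ k) a * (\<delta> ^^ (n - k)) b)
        = (\<iota> (theta_coeff s k) * (\<delta> ^^ k) a) * (\<iota> (theta_coeff s (n - k)) * (\<delta> ^^ (n - k)) b)"
      by (metis (no_types, lifting) mult.assoc mult.left_commute)
    have "- int k + - int (n - k) = - int n"
      using kn by simp
    then have "fls_X_intpow (- int n) = (fls_X_intpow (- int k) :: 'b fls) * fls_X_intpow (- int (n - k))"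
      by (metis fls_X_intpow_times_fls_X_intpow)
    then show "fls_const (\<iota> (theta_coeff s n) * (of_nat (n choose k) * (\<delta> ^^ k) a * (\<delta> ^^ (n - k)) b))
        * fls_X_intpow (- int n) = theta_term \<iota> \<delta> s a k * theta_term \<iota> \<delta> s b (n - k)"
      unfolding coeff theta_term_def by (simp add: mult_ac flip: fls_const_mult_const)
  qed
  finally show ?thesis .
qed

lemma theta_mult: "theta \<iota> \<delta> s (a * b) = theta \<iota> \<delta> s a * theta \<iota> \<delta> s b"
proof -
  obtain N where a: "\<And>m. N \<le> m \<Longrightarrow> (\<delta> ^^ m) a = 0" and b: "\<And>m. N \<le> m \<Longrightarrow> (\<delta> ^^ m) b = 0"
    by (metis funpow_delta_eventually_0 max.boundedE)
  have "(\<delta> ^^ (2 * N)) (a * b) = 0"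
    unfolding funpow_Leibniz[of \<delta>, OF derivation_add[OF derivation] derivation_mult[OF derivation]]
  proof (rule sum.neutral, intro ballI)
    fix k
    show "of_nat (2 * N choose k) * (\<delta> ^^ k) a * (\<delta> ^^ (2 * N - k)) b = 0"
      using a[of k] b[of "2 * N - k"] by (cases "N \<le> k") auto
  qed
  then have "theta \<iota> \<delta> s (a * b)
      = (\<Sum>n<2 * N. \<Sum>k\<le>n. theta_term \<iota> \<delta> s a k * theta_term \<iota> \<delta> s b (n - k))"
    by (simp add: theta_eq_theta_trunc theta_trunc_def theta_term_mult)
  also have "\<dots> = theta_trunc \<iota> \<delta> s N a * theta_trunc \<iota> \<delta> s N b"
    unfolding theta_trunc_def
    by (rule sum_convolution_truncated) (simp_all add: theta_term_def a b)
  finally show ?thesis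
    using a[of N] b[of N] by (simp add: theta_eq_theta_trunc)
qed

lemma funpow_delta_commute:
  assumes comm: "\<And>b. \<alpha> (\<delta> b) = \<delta> (\<alpha> b + \<iota> s * b)"
  shows "\<alpha> ((\<delta> ^^ n) b) = (\<delta> ^^ n) (\<alpha> b) + \<iota> (of_nat n * s) * (\<delta> ^^ n) b"
proof (induction n)
  case 0
  show ?case
    using ring_hom by (simp add: ring_hom_map_0)
next
  case (Suc n)
  have "\<alpha> ((\<delta> ^^ Suc n) b) = \<delta> ((\<delta> ^^ n) (\<alpha> b) + \<iota> (of_nat n * s) * (\<delta> ^^ n) b + \<iota> s * (\<delta> ^^ n) b)"
    using comm Suc by simp
  also have "\<dots> = (\<delta> ^^ Suc n) (\<alpha> b) + \<iota> (of_nat (Suc n) * s) * (\<delta> ^^ Suc n) b"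
    using ring_hom
    by (simp add: derivation_add[OF derivation] derivation_scale[OF derivation] ring_hom_map_add
        distrib_right add.assoc)
  finally show ?case .
qed

lemma bracket_X_theta_term:
  assumes ext: "poisson_laurent_ext \<iota> PB \<alpha> \<delta> P" and \<alpha>: "derivation \<iota> \<alpha>" and "s \<noteq> 0"
    and comm: "\<And>b. \<alpha> (\<delta> b) = \<delta> (\<alpha> b + \<iota> s * b)"
  shows "P fls_X (theta_term \<iota> \<delta> s b n) = theta_term \<iota> \<delta> s (\<alpha> b) n * fls_X
    + (theta_shift_part \<iota> \<delta> s b n - theta_shift_part \<iota> \<delta> s b (Suc n))"
proof -
  define c where "c = \<iota> (theta_coeff s n)"
  have "\<iota> (theta_coeff s (Suc n) * (of_nat (Suc n) * s)) = - c"
    unfolding c_def theta_coeff_Suc[OF \<open>s \<noteq> 0\<close>] using ring_hom by (rule ring_hom_map_uminus)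
  moreover have "fls_X_intpow (- int (Suc n)) * fls_X = (fls_X_intpow (- int n) :: 'b fls)"
    by (simp add: fls_X_conv_shift_1 fls_X_intpow_times_conv_shift)
  ultimately have shift_Suc:
    "theta_shift_part \<iota> \<delta> s b (Suc n) = - (fls_const (c * (\<delta> ^^ Suc n) b) * fls_X_intpow (- int n))"
    unfolding theta_shift_part_def by (simp add: mult.assoc)
  have "\<alpha> (c * (\<delta> ^^ n) b) = c * (\<delta> ^^ n) (\<alpha> b) + \<iota> (theta_coeff s n * (of_nat n * s)) * (\<delta> ^^ n) b"
    unfolding c_def derivation_scale[OF \<alpha>] funpow_delta_commute[OF comm]
    using ring_hom by (simp add: ring_hom_map_mult distrib_left mult.assoc)
  moreover have "\<delta> (c * (\<delta> ^^ n) b) = c * (\<delta> ^^ Suc n) b"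
    unfolding c_def derivation_scale[OF derivation] by simp
  ultimately show ?thesis
    unfolding theta_term_def c_def[symmetric] shift_Suc poisson_laurent_ext_X_monomial[OF ring_hom ext]
    by (simp add: theta_shift_part_def algebra_simps flip: fls_plus_const fls_const_mult_const)
qed

lemma bracket_X_theta:
  assumes ext: "poisson_laurent_ext \<iota> PB \<alpha> \<delta> P" and \<alpha>: "derivation \<iota> \<alpha>" and "s \<noteq> 0"
    and comm: "\<And>b. \<alpha> (\<delta> b) = \<delta> (\<alpha> b + \<iota> s * b)"
  shows "P fls_X (theta \<iota> \<delta> s b) = theta \<iota> \<delta> s (\<alpha> b) * fls_X"
proof -
  obtain N where N: "(\<delta> ^^ N) b = 0"
    using funpow_delta_eventually_0 by blast
  then have \<alpha>N: "(\<delta> ^^ N) (\<alpha> b) = 0"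
    using funpow_delta_commute[OF comm, of N b] derivation_add[OF \<alpha>, of 0 0] by simp
  have "P fls_X (theta \<iota> \<delta> s b) = (\<Sum>n<N. P fls_X (theta_term \<iota> \<delta> s b n))"
    unfolding theta_eq_theta_trunc[OF N] theta_trunc_def
    by (rule poisson_laurent_ext_X_sum[OF ext theta_term_in_laurent_polys])
  also have "\<dots> = theta_trunc \<iota> \<delta> s N (\<alpha> b) * fls_X
      + (theta_shift_part \<iota> \<delta> s b 0 - theta_shift_part \<iota> \<delta> s b N)"
    by (simp add: bracket_X_theta_term[OF assms] sum.distrib sum_lessThan_telescope'
        theta_trunc_def sum_distrib_right)
  also have "theta_shift_part \<iota> \<delta> s b 0 - theta_shift_part \<iota> \<delta> s b N = 0"
    using ring_hom by (simp add: theta_shift_part_def N ring_hom_map_0)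
  finally show ?thesis
    by (simp add: theta_eq_theta_trunc[OF \<alpha>N])
qed

end

theorem lemma3p5:
  fixes \<iota> :: "'k::field_char_0 \<Rightarrow> 'b::comm_ring_1"
    and PB :: "'b \<Rightarrow> 'b \<Rightarrow> 'b" and \<alpha> \<delta> :: "'b \<Rightarrow> 'b" and s :: 'k
  assumes iota: "ring_hom_map \<iota>"
    and PB: "poisson_bracket \<iota> PB"
    and alpha: "poisson_derivation \<iota> PB \<alpha>"
    and delta: "derivation \<iota> \<delta>"
    and delta_compat: "\<forall>a b. \<delta> (PB a b) = PB (\<delta> a) b + PB a (\<delta> b) + \<alpha> a * \<delta> b - \<delta> a * \<alpha> b"
    and nil: "locally_nilpotent \<delta>"
    and s: "s \<noteq> 0"
    and comm: "\<forall>b. \<alpha> (\<delta> b) = \<delta> (\<alpha> b + \<iota> s * b)"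
  shows "(\<forall>b. theta \<iota> \<delta> s b \<in> laurent_polys)
       \<and> (\<forall>a b. theta \<iota> \<delta> s (a + b) = theta \<iota> \<delta> s a + theta \<iota> \<delta> s b)
       \<and> (\<forall>a b. theta \<iota> \<delta> s (a * b) = theta \<iota> \<delta> s a * theta \<iota> \<delta> s b)
       \<and> theta \<iota> \<delta> s 1 = 1
       \<and> (\<forall>c b. theta \<iota> \<delta> s (\<iota> c * b) = laurent_iota \<iota> c * theta \<iota> \<delta> s b)
       \<and> (\<forall>P. poisson_laurent_ext \<iota> PB \<alpha> \<delta> P \<longrightarrow>
             (\<forall>b. P fls_X (theta \<iota> \<delta> s b) = theta \<iota> \<delta> s (\<alpha> b) * fls_X))"
proof -
  interpret locally_nilpotent_derivation \<iota> \<delta>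
    using iota delta nil by unfold_locales
  have "derivation \<iota> \<alpha>"
    using alpha unfolding poisson_derivation_def by blast
  then show ?thesis
    using theta_in_laurent_polys theta_add theta_mult theta_one theta_scale
      bracket_X_theta[OF _ _ s comm[rule_format]]
    by blast
qed

end
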